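(* For every $n\in\mathbb{N}$ and every $l\in\{0,1,\dots,5\}$ there is a triangle-free outerplanar graph $G$ with $|V(G)|>n$, $|V_1(G)|=l$ and $\rho_G^3=3$ that has no equitable $3$-coloring.
   Context: For a graph $G$, $V_1(G)$ is the set of vertices of degree $1$, and for $A\subseteq V(G)$, $\|G[A]\|$ is the number of edges of $G[A]$. Define $\rho_G^3(A)=6\|G[A]\|-7|A|+3|A\cap V_1(G)|$ and $\rho_G^3=\max_{A\subseteq V(G)}\rho_G^3(A)$ (including $A=\emptyset$). An equitable $3$-coloring is a proper vertex coloring with $3$ colors in which the sizes of any two color classes differ by at most $1$. *)

theory Defs
  imports "HOL-Analysis.Analysis"
begin

definition simple_graph :: "'a set \<Rightarrow> 'a set set \<Rightarrow> bool" where
  "simple_graph V E \<longleftrightarrow> finite V \<and>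
     (\<forall>e\<in>E. \<exists>u v. e = {u, v} \<and> u \<noteq> v \<and> u \<in> V \<and> v \<in> V)"

definition degree :: "'a set set \<Rightarrow> 'a \<Rightarrow> nat" where
  "degree E v = card {e\<in>E. v \<in> e}"

definition V1 :: "'a set \<Rightarrow> 'a set set \<Rightarrow> 'a set" where
  "V1 V E = {v\<in>V. degree E v = 1}"

definition induced_edges :: "'a set set \<Rightarrow> 'a set \<Rightarrow> nat" where
  "induced_edges E A = card {e\<in>E. e \<subseteq> A}"

definition rho3_set :: "'a set \<Rightarrow> 'a set set \<Rightarrow> 'a set \<Rightarrow> int" where
  "rho3_set V E A = 6 * int (induced_edges E A) - 7 * int (card A) + 3 * int (card (A \<inter> V1 V E))"

definition rho3 :: "'a set \<Rightarrow> 'a set set \<Rightarrow> int" where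
  "rho3 V E = Max (rho3_set V E ` Pow V)"

definition triangle_free :: "'a set set \<Rightarrow> bool" where
  "triangle_free E \<longleftrightarrow> \<not> (\<exists>a b c. a \<noteq> b \<and> b \<noteq> c \<and> a \<noteq> c \<and>
       {a, b} \<in> E \<and> {b, c} \<in> E \<and> {a, c} \<in> E)"

definition equitable_3_coloring :: "'a set \<Rightarrow> 'a set set \<Rightarrow> ('a \<Rightarrow> nat) \<Rightarrow> bool" where
  "equitable_3_coloring V E f \<longleftrightarrow>
     (\<forall>v\<in>V. f v < 3) \<and>
     (\<forall>e\<in>E. \<forall>u\<in>e. \<forall>v\<in>e. u \<noteq> v \<longrightarrow> f u \<noteq> f v) \<and>
     (\<forall>i<3. \<forall>j<3. card {v\<in>V. f v = i} \<le> card {v\<in>V. f v = j} + 1)"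

text \<open>Outerplanar: some drawing where every vertex lies on the
  boundary (closure) of the outer (unbounded) face of the drawing.\<close>
definition plane_drawing :: "'a set \<Rightarrow> 'a set set \<Rightarrow> ('a \<Rightarrow> complex) \<Rightarrow> ('a set \<Rightarrow> real \<Rightarrow> complex) \<Rightarrow> bool" where
  "plane_drawing V E pos arcs \<longleftrightarrow>
     inj_on pos V \<and>
     (\<forall>e\<in>E. arc (arcs e) \<and> {pathstart (arcs e), pathfinish (arcs e)} = pos ` e \<and>
              path_image (arcs e) \<inter> pos ` V = pos ` e) \<and>
     (\<forall>e\<in>E. \<forall>e'\<in>E. e \<noteq> e' \<longrightarrow> path_image (arcs e) \<inter> path_image (arcs e') \<subseteq> pos ` (e \<inter> e'))"

definition drawing_image :: "'a set \<Rightarrow> 'a set set \<Rightarrow> ('a \<Rightarrow> complex) \<Rightarrow> ('a set \<Rightarrow> real \<Rightarrow> complex) \<Rightarrow> complex set" where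
  "drawing_image V E pos arcs = pos ` V \<union> (\<Union>e\<in>E. path_image (arcs e))"

definition outerplanar :: "'a set \<Rightarrow> 'a set set \<Rightarrow> bool" where
  "outerplanar V E \<longleftrightarrow> (\<exists>pos arcs. plane_drawing V E pos arcs \<and>
      pos ` V \<subseteq> closure (outside (drawing_image V E pos arcs)))"

end

theory Submission
  imports Defs
begin

text \<open>
  The witness is a bouquet glued at a hub vertex \<open>0\<close>: \<open>l\<close> pendant edges, \<open>5 - l\<close> five-cycles
  and \<open>n\<close> seven-cycles, so it has \<open>21 - 3 l + 6 n = 3 t\<close> vertices with \<open>t = 7 - l + 2 n\<close>.
  Computing \<open>\<rho>(A)\<close> petal by petal, a petal contributes nothing when the hub is not in \<open>A\<close>,
  and at most \<open>2\<close>, \<open>2\<close>, \<open>0\<close> (pendant edge, five-cycle, seven-cycle) when it is, with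
  equality for the whole petal; the hub itself costs \<open>7\<close>, so \<open>\<rho> = 10 - 7 = 3\<close>.
  In an equitable 3-colouring every colour class has exactly \<open>t\<close> vertices, but an independent
  set through the hub avoids the pendant vertices and meets a five-cycle in at most one and a
  seven-cycle in at most two further vertices, so it has at most \<open>1 + (5 - l) + 2 n < t\<close> vertices.
  Outerplanarity: with the vertices on the parabola \<open>y = x\<^sup>2\<close> and the edges drawn as chords,
  no two edges interleave, and the whole drawing lies above the parabola, so every vertex is
  approached from the unbounded region below it.
\<close>

section \<open>Outerplanar drawings on a parabola\<close>

definition parabola :: "real \<Rightarrow> complex" where
  "parabola x = Complex x (x\<^sup>2)"

lemma inj_parabola: "inj parabola"
  by (rule injI) (simp add: parabola_def complex_eq_iff)

lemma parabola_chord: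
  assumes "z \<in> closed_segment (parabola a) (parabola b)" "a \<le> b"
  shows "a \<le> Re z \<and> Re z \<le> b \<and> Im z - (Re z)\<^sup>2 = (Re z - a) * (b - Re z)"
proof -
  obtain u where u: "0 \<le> u" "u \<le> 1" and z: "z = (1 - u) *\<^sub>R parabola a + u *\<^sub>R parabola b"
    using assms(1) by (auto simp: in_segment)
  have re: "Re z = a + u * (b - a)" and im: "Im z = (1 - u) * a\<^sup>2 + u * b\<^sup>2"
    unfolding z by (simp_all add: parabola_def algebra_simps)
  have "0 \<le> u * (b - a)" "u * (b - a) \<le> b - a"
    using u assms(2) by (simp_all add: mult_left_le_one_le)
  moreover have "Im z - (Re z)\<^sup>2 = (Re z - a) * (b - Re z)"
    unfolding re im by (simp add: algebra_simps power2_eq_square)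
  ultimately show ?thesis
    unfolding re by simp
qed

lemma parabola_on_chord:
  assumes "parabola x \<in> closed_segment (parabola a) (parabola b)" "a \<le> b"
  shows "x = a \<or> x = b"
  using parabola_chord[OF assms] by (force simp: parabola_def)

lemma chord_above_parabola:
  assumes "z \<in> closed_segment (parabola a) (parabola b)" "a \<le> b"
  shows "(Re z)\<^sup>2 \<le> Im z"
  using parabola_chord[OF assms] by (smt (verit) mult_nonneg_nonneg)

lemma nested_chords_meet_at_ends:
  fixes a b c d x :: real
  assumes "a \<le> c" "c < d" "d \<le> b" "(a, b) \<noteq> (c, d)" "c \<le> x" "x \<le> d"
    and "(x - a) * (b - x) = (x - c) * (d - x)"
  shows "x \<in> {a, b} \<inter> {c, d}"
proof -
  have "(x - a) * (b - x) - (x - c) * (d - x) = (c - a) * (b - x) + (x - c) * (b - d)"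
    by (simp add: algebra_simps)
  moreover have "0 \<le> (c - a) * (b - x)" "0 \<le> (x - c) * (b - d)"
    using assms by simp_all
  ultimately have "(c - a) * (b - x) = 0" "(x - c) * (b - d) = 0"
    using assms(7) by linarith+
  then show ?thesis
    using assms(1-6) by auto
qed

lemma parabola_chords_meet_at_ends:
  assumes "a < b" "c < d" "(a, b) \<noteq> (c, d)"
    and "\<not> (a < c \<and> c < b \<and> b < d)" "\<not> (c < a \<and> a < d \<and> d < b)"
    and "z \<in> closed_segment (parabola a) (parabola b)"
    and "z \<in> closed_segment (parabola c) (parabola d)"
  shows "\<exists>x \<in> {a, b} \<inter> {c, d}. z = parabola x"
proof -
  define x where "x = Re z"
  have ab: "a \<le> x" "x \<le> b" "Im z - x\<^sup>2 = (x - a) * (b - x)"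
    using parabola_chord[OF assms(6)] assms(1) unfolding x_def by auto
  have cd: "c \<le> x" "x \<le> d" "Im z - x\<^sup>2 = (x - c) * (d - x)"
    using parabola_chord[OF assms(7)] assms(2) unfolding x_def by auto
  have end_point: "x \<in> {a, b} \<inter> {c, d}"
  proof (cases "b \<le> c \<or> d \<le> a")
    case True
    then show ?thesis using ab cd by auto
  next
    case False
    then have "a \<le> c \<and> d \<le> b \<or> c \<le> a \<and> b \<le> d"
      using assms(4,5) by (cases a c rule: linorder_cases) auto
    then show ?thesis
      using nested_chords_meet_at_ends[of a c d b x] nested_chords_meet_at_ends[of c a b d x]
        ab cd assms(1-3) by auto
  qed
  then have "z = parabola x"
    using ab by (auto simp: parabola_def complex_eq_iff x_def)
  with end_point show ?thesis by blast
qed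

lemma below_parabola_in_outside:
  assumes "D \<subseteq> {z. (Re z)\<^sup>2 \<le> Im z}" "0 < t"
  shows "Complex x (x\<^sup>2 - t) \<in> outside D"
proof -
  define ray where "ray = (\<lambda>s. Complex x (x\<^sup>2 - s)) ` {t..}"
  have "connected ray"
    unfolding ray_def by (intro connected_continuous_image connected_Ici continuous_intros)
  moreover have "ray \<subseteq> - D"
    using assms by (fastforce simp: ray_def)
  ultimately have "ray \<subseteq> connected_component_set (- D) (Complex x (x\<^sup>2 - t))"
    by (intro connected_component_maximal) (auto simp: ray_def)
  moreover have "\<not> bounded ray"
  proof
    assume "bounded ray"
    then obtain B where B: "\<forall>w\<in>ray. norm w \<le> B"
      by (auto simp: bounded_iff)
    define s where "s = max t (x\<^sup>2 + \<bar>B\<bar> + 1)"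
    have "norm (Complex x (x\<^sup>2 - s)) \<le> B"
      using B by (auto simp: ray_def s_def)
    moreover have "\<bar>x\<^sup>2 - s\<bar> \<le> norm (Complex x (x\<^sup>2 - s))"
      using abs_Im_le_cmod[of "Complex x (x\<^sup>2 - s)"] by simp
    ultimately show False
      unfolding s_def by linarith
  qed
  ultimately show ?thesis
    unfolding outside using bounded_subset by blast
qed

lemma parabola_in_closure_outside:
  assumes "D \<subseteq> {z. (Re z)\<^sup>2 \<le> Im z}"
  shows "parabola x \<in> closure (outside D)"
  unfolding closure_approachable
proof (intro allI impI)
  fix e :: real
  assume "0 < e"
  then have "Complex x (x\<^sup>2 - e / 2) \<in> outside D"
    by (intro below_parabola_in_outside[OF assms]) simp
  moreover have "Complex x (x\<^sup>2 - e / 2) - parabola x = Complex 0 (- (e / 2))"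
    by (simp add: parabola_def complex_eq_iff)
  then have "dist (Complex x (x\<^sup>2 - e / 2)) (parabola x) < e"
    using \<open>0 < e\<close> by (simp add: dist_norm complex_norm)
  ultimately show "\<exists>y\<in>outside D. dist y (parabola x) < e"
    by blast
qed

definition chords_cross :: "nat set \<Rightarrow> nat set \<Rightarrow> bool" where
  "chords_cross e e' \<longleftrightarrow> Min e < Min e' \<and> Min e' < Max e \<and> Max e < Max e'"

definition chord :: "nat set \<Rightarrow> real \<Rightarrow> complex" where
  "chord e = linepath (parabola (Min e)) (parabola (Max e))"

lemma card_2_Min_Max:
  fixes e :: "'a::linorder set"
  assumes "card e = 2"
  shows "Min e < Max e \<and> e = {Min e, Max e}"
proof -
  obtain x y where "e = {x, y}" "x \<noteq> y"
    using assms by (auto simp: card_2_iff)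
  then show ?thesis
    by (cases x y rule: linorder_cases) (auto simp: min_def max_def)
qed

lemma plane_drawing_chords:
  assumes edges: "\<And>e. e \<in> E \<Longrightarrow> card e = 2 \<and> e \<subseteq> V"
    and noncrossing: "\<And>e e'. e \<in> E \<Longrightarrow> e' \<in> E \<Longrightarrow> \<not> chords_cross e e'"
  shows "plane_drawing V E (\<lambda>v. parabola (real v)) chord"
  unfolding plane_drawing_def
proof (intro conjI ballI impI)
  show "inj_on (\<lambda>v. parabola (real v)) V"
    by (rule inj_onI) (metis injD inj_parabola of_nat_eq_iff)
next
  fix e
  assume e: "e \<in> E"
  have ends: "Min e < Max e" "e = {Min e, Max e}"
    using card_2_Min_Max edges[OF e] by blast+
  have "parabola (Min e) \<noteq> parabola (Max e)"
    using ends by (metis injD inj_parabola of_nat_eq_iff less_irrefl)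
  then show "arc (chord e)"
    by (simp add: chord_def)
  show "{pathstart (chord e), pathfinish (chord e)} = (\<lambda>v. parabola (real v)) ` e"
    by (subst (3) ends(2)) (simp add: chord_def)
  have "path_image (chord e) \<inter> (\<lambda>v. parabola (real v)) ` V \<subseteq> (\<lambda>v. parabola (real v)) ` e"
  proof
    fix z
    assume "z \<in> path_image (chord e) \<inter> (\<lambda>v. parabola (real v)) ` V"
    then obtain v where v: "z = parabola (real v)" "parabola (real v) \<in> path_image (chord e)"
      by blast
    then have "real v = real (Min e) \<or> real v = real (Max e)"
      using ends(1) by (intro parabola_on_chord) (auto simp: chord_def)
    then have "v \<in> e"
      using ends(2) by (metis insertI1 insertI2 of_nat_eq_iff)
    with v show "z \<in> (\<lambda>v. parabola (real v)) ` e"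
      by blast
  qed
  moreover have "(\<lambda>v. parabola (real v)) ` e \<subseteq> path_image (chord e)"
    by (subst ends(2)) (auto simp: chord_def)
  ultimately show "path_image (chord e) \<inter> (\<lambda>v. parabola (real v)) ` V = (\<lambda>v. parabola (real v)) ` e"
    using edges[OF e] by blast
next
  fix e e'
  assume e: "e \<in> E" and e': "e' \<in> E" and "e \<noteq> e'"
  have ends: "Min e < Max e" "e = {Min e, Max e}" "Min e' < Max e'" "e' = {Min e', Max e'}"
    using card_2_Min_Max edges[OF e] edges[OF e'] by blast+
  with \<open>e \<noteq> e'\<close> have "(real (Min e), real (Max e)) \<noteq> (real (Min e'), real (Max e'))"
    by (metis of_nat_eq_iff prod.inject)
  then show "path_image (chord e) \<inter> path_image (chord e') \<subseteq> (\<lambda>v. parabola (real v)) ` (e \<inter> e')"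
    using parabola_chords_meet_at_ends[of "Min e" "Max e" "Min e'" "Max e'"]
      noncrossing[OF e e'] noncrossing[OF e' e] ends
    unfolding chords_cross_def chord_def
    by (fastforce simp: image_iff)
qed

lemma outerplanar_if_noncrossing:
  assumes edges: "\<And>e. e \<in> E \<Longrightarrow> card e = 2 \<and> e \<subseteq> V"
    and noncrossing: "\<And>e e'. e \<in> E \<Longrightarrow> e' \<in> E \<Longrightarrow> \<not> chords_cross e e'"
  shows "outerplanar V E"
proof -
  let ?pos = "\<lambda>v. parabola (real v)"
  have "Min e < Max e" if "e \<in> E" for e
    using card_2_Min_Max edges[OF that] by blast
  then have "drawing_image V E ?pos chord \<subseteq> {z. (Re z)\<^sup>2 \<le> Im z}"
    using chord_above_parabola by (fastforce simp: drawing_image_def parabola_def chord_def)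
  then have "?pos ` V \<subseteq> closure (outside (drawing_image V E ?pos chord))"
    using parabola_in_closure_outside by auto
  with plane_drawing_chords[OF assms] show ?thesis
    unfolding outerplanar_def by blast
qed

section \<open>Degrees and equitable colourings\<close>

lemma degree_Un_left:
  assumes "\<And>e. e \<in> F \<Longrightarrow> x \<notin> e"
  shows "degree (E \<union> F) x = degree E x"
proof -
  have "{e \<in> E \<union> F. x \<in> e} = {e \<in> E. x \<in> e}"
    using assms by blast
  then show ?thesis
    by (simp add: degree_def)
qed

lemma two_le_degree:
  assumes "finite E" "e1 \<in> E" "e2 \<in> E" "e1 \<noteq> e2" "x \<in> e1" "x \<in> e2"
  shows "2 \<le> degree E x"
proof -
  have "card {e1, e2} \<le> degree E x"
    unfolding degree_def using assms by (intro card_mono) auto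
  then show ?thesis
    using assms(4) by simp
qed

lemma equitable_3_coloring_class_card:
  assumes "equitable_3_coloring V E f" "finite V" "card V = 3 * t" "i < 3"
  shows "card {v \<in> V. f v = i} = t"
proof -
  let ?K = "\<lambda>j. card {v \<in> V. f v = j}"
  have colours: "\<forall>v \<in> V. f v < 3" and balanced: "\<And>j k. j < 3 \<Longrightarrow> k < 3 \<Longrightarrow> ?K j \<le> ?K k + 1"
    using assms(1) unfolding equitable_3_coloring_def by auto
  have "V = (\<Union>j \<in> {..<3}. {v \<in> V. f v = j})"
    using colours by auto
  moreover have "card (\<Union>j \<in> {..<3}. {v \<in> V. f v = j}) = (\<Sum>j<3. ?K j)"
    by (rule card_UN_disjoint) (use assms(2) in auto)
  ultimately have "card V = (\<Sum>j<3. ?K j)"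
    by simp
  then have "3 * t = ?K 0 + ?K 1 + ?K 2"
    using assms(3) by (simp add: numeral_3_eq_3 numeral_2_eq_2)
  moreover have "i = 0 \<or> i = 1 \<or> i = 2"
    using assms(4) by auto
  ultimately show ?thesis
    using balanced[of i 0] balanced[of i 1] balanced[of i 2]
      balanced[of 0 i] balanced[of 1 i] balanced[of 2 i] assms(4)
    by auto
qed

lemma equitable_3_coloring_class_independent:
  assumes "simple_graph V E" "equitable_3_coloring V E f" "e \<in> E"
  shows "\<not> e \<subseteq> {v \<in> V. f v = i}"
proof
  assume "e \<subseteq> {v \<in> V. f v = i}"
  moreover obtain u v where "e = {u, v}" "u \<noteq> v"
    using assms(1,3) unfolding simple_graph_def by blast
  ultimately show False
    using assms(2,3) unfolding equitable_3_coloring_def by fastforce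
qed

lemma no_equitable_3_coloring:
  assumes "simple_graph V E" "card V = 3 * t" "v \<in> V"
    and small: "\<And>C. C \<subseteq> V \<Longrightarrow> v \<in> C \<Longrightarrow> \<forall>e \<in> E. \<not> e \<subseteq> C \<Longrightarrow> card C < t"
  shows "\<not> (\<exists>f. equitable_3_coloring V E f)"
proof
  assume "\<exists>f. equitable_3_coloring V E f"
  then obtain f where f: "equitable_3_coloring V E f"
    by blast
  let ?C = "{u \<in> V. f u = f v}"
  have "f v < 3"
    using f assms(3) unfolding equitable_3_coloring_def by blast
  then have "card ?C = t"
    using equitable_3_coloring_class_card[OF f _ assms(2)] assms(1) by (simp add: simple_graph_def)
  moreover have "card ?C < t"
    using small[of ?C] equitable_3_coloring_class_independent[OF assms(1) f] assms(3) by blast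
  ultimately show False
    by simp
qed

section \<open>Bouquets of cycles\<close>

text \<open>
  The petal of size \<open>r\<close> at offset \<open>off\<close> occupies the vertices \<open>off + 1, \<dots>, off + r\<close>:
  it is the pendant edge \<open>{0, off + 1}\<close> if \<open>r = 1\<close>, and otherwise the cycle
  \<open>0, off + 1, \<dots>, off + r\<close> of length \<open>r + 1\<close>.
\<close>

definition petal_edges :: "nat \<Rightarrow> nat \<Rightarrow> nat set set" where
  "petal_edges p q = {{0, p}, {0, q}} \<union> (\<lambda>i. {i, Suc i}) ` {p..<q}"

fun bouquet_edges :: "nat \<Rightarrow> nat list \<Rightarrow> nat set set" where
  "bouquet_edges off [] = {}"
| "bouquet_edges off (r # rs) = petal_edges (Suc off) (off + r) \<union> bouquet_edges (off + r) rs"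

fun bouquet_leaves :: "nat \<Rightarrow> nat list \<Rightarrow> nat set" where
  "bouquet_leaves off [] = {}"
| "bouquet_leaves off (r # rs) = (if r = 1 then {Suc off} else {}) \<union> bouquet_leaves (off + r) rs"

definition bouquet_vertices :: "nat \<Rightarrow> nat list \<Rightarrow> nat set" where
  "bouquet_vertices off rs = insert 0 {Suc off..off + sum_list rs}"

lemma spokes_in_petal_edges: "{0, p} \<in> petal_edges p q" "{0, q} \<in> petal_edges p q"
  by (simp_all add: petal_edges_def)

lemma rim_in_petal_edges: "p \<le> i \<Longrightarrow> i < q \<Longrightarrow> {i, Suc i} \<in> petal_edges p q"
  by (auto simp: petal_edges_def)

lemma finite_petal_edges: "finite (petal_edges p q)"
  by (simp add: petal_edges_def)

lemma finite_bouquet_edges: "finite (bouquet_edges off rs)"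
  by (induction rs arbitrary: off) (simp_all add: finite_petal_edges)

lemma petal_edge_subset: "p \<le> q \<Longrightarrow> e \<in> petal_edges p q \<Longrightarrow> e \<subseteq> insert 0 {p..q}"
  by (auto simp: petal_edges_def)

lemma petal_edge_shape:
  assumes "0 < p" "p \<le> q" "e \<in> petal_edges p q"
  shows "(\<exists>x>0. e = {0, x}) \<or> (\<exists>i. e = {i, Suc i})"
proof -
  consider "e = {0, p}" | "e = {0, q}" | i where "e = {i, Suc i}"
    using assms(3) unfolding petal_edges_def by blast
  then show ?thesis
  proof cases
    case 1
    then show ?thesis using assms(1) by blast
  next
    case 2
    then show ?thesis using assms(1,2) by (intro disjI1 exI[of _ q]) simp
  next
    case 3
    then show ?thesis by blast
  qed
qed

lemma card_bouquet_vertices: "card (bouquet_vertices off rs) = Suc (sum_list rs)"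
  by (simp add: bouquet_vertices_def)

lemma bouquet_tail_vertices:
  "bouquet_vertices (off + r) rs = insert 0 {Suc (off + r)..off + sum_list (r # rs)}"
  by (simp add: bouquet_vertices_def add.assoc)

lemma bouquet_edge_subset:
  assumes "0 \<notin> set rs" "e \<in> bouquet_edges off rs"
  shows "e \<subseteq> bouquet_vertices off rs"
  using assms
proof (induction rs arbitrary: off)
  case (Cons r rs)
  show ?case
  proof (cases "e \<in> petal_edges (Suc off) (off + r)")
    case True
    then show ?thesis
      using petal_edge_subset[OF _ True] Cons.prems by (force simp: bouquet_vertices_def)
  next
    case False
    then show ?thesis
      using Cons by (force simp: bouquet_vertices_def)
  qed
qed simp

lemma bouquet_edge_shape:
  "0 \<notin> set rs \<Longrightarrow> e \<in> bouquet_edges off rs \<Longrightarrow> (\<exists>x>0. e = {0, x}) \<or> (\<exists>i. e = {i, Suc i})"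
  by (induction rs arbitrary: off) (auto dest: petal_edge_shape[rotated 2])

lemma bouquet_leaves_subset: "bouquet_leaves off rs \<subseteq> {Suc off..off + sum_list rs}"
proof (induction rs arbitrary: off)
  case (Cons r rs)
  have "bouquet_leaves (off + r) rs \<subseteq> {Suc off..off + sum_list (r # rs)}"
    using Cons.IH[of "off + r"] by auto
  then show ?case
    by auto
qed simp

lemma not_chords_cross_spoke_or_rim:
  assumes "(\<exists>x>0. e' = {0, x}) \<or> (\<exists>i. e' = {i, Suc i})"
  shows "\<not> chords_cross e e'"
proof
  assume cross: "chords_cross e e'"
  from assms show False
  proof
    assume "\<exists>x>0. e' = {0, x}"
    then have "Min e' = 0"
      by auto
    with cross show False
      by (simp add: chords_cross_def)
  next
    assume "\<exists>i. e' = {i, Suc i}"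
    then obtain i where "Min e' = i" "Max e' = Suc i"
      by auto
    with cross show False
      by (auto simp: chords_cross_def)
  qed
qed

lemma card_spoke_or_rim:
  assumes "(\<exists>x>0. e = {0, x}) \<or> (\<exists>i. e = {i, Suc i})"
  shows "card e = 2"
  using assms by auto

lemma outerplanar_bouquet:
  assumes "0 \<notin> set rs"
  shows "outerplanar (bouquet_vertices off rs) (bouquet_edges off rs)"
proof (rule outerplanar_if_noncrossing)
  fix e
  assume "e \<in> bouquet_edges off rs"
  then show "card e = 2 \<and> e \<subseteq> bouquet_vertices off rs"
    using card_spoke_or_rim[OF bouquet_edge_shape[OF assms]] bouquet_edge_subset[OF assms] by simp
next
  fix e e'
  assume "e' \<in> bouquet_edges off rs"
  then show "\<not> chords_cross e e'"
    by (rule not_chords_cross_spoke_or_rim[OF bouquet_edge_shape[OF assms]])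
qed

lemma simple_graph_bouquet:
  assumes "0 \<notin> set rs"
  shows "simple_graph (bouquet_vertices off rs) (bouquet_edges off rs)"
  unfolding simple_graph_def
proof (intro conjI ballI)
  show "finite (bouquet_vertices off rs)"
    by (simp add: bouquet_vertices_def)
next
  fix e
  assume e: "e \<in> bouquet_edges off rs"
  show "\<exists>u v. e = {u, v} \<and> u \<noteq> v \<and> u \<in> bouquet_vertices off rs \<and> v \<in> bouquet_vertices off rs"
    using card_spoke_or_rim[OF bouquet_edge_shape[OF assms e]] bouquet_edge_subset[OF assms e]
    by (auto simp: card_2_iff)
qed

lemma petal_spoke:
  assumes "0 < p" "0 < x" "{0, x} \<in> petal_edges p q"
  shows "x = p \<or> x = q"
  using assms by (auto simp: petal_edges_def doubleton_eq_iff)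

lemma bouquet_no_hub_triangle:
  assumes "0 \<notin> set rs" "2 \<notin> set rs" "0 < a"
    and "{0, a} \<in> bouquet_edges off rs" "{0, Suc a} \<in> bouquet_edges off rs"
    and "{a, Suc a} \<in> bouquet_edges off rs"
  shows False
  using assms
proof (induction rs arbitrary: off)
  case (Cons r rs)
  have tail: "e \<subseteq> insert 0 {Suc (off + r)..}" if "e \<in> bouquet_edges (off + r) rs" for e
    using bouquet_edge_subset[OF _ that] Cons.prems(1) by (auto simp: bouquet_vertices_def)
  have petal: "e \<subseteq> insert 0 {Suc off..off + r}" if "e \<in> petal_edges (Suc off) (off + r)" for e
    using petal_edge_subset[OF _ that] Cons.prems(1) by auto
  show False
  proof (cases "{a, Suc a} \<in> bouquet_edges (off + r) rs")
    case True
    then have "off + r < a"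
      using tail \<open>0 < a\<close> by fastforce
    then have "{0, a} \<in> bouquet_edges (off + r) rs" "{0, Suc a} \<in> bouquet_edges (off + r) rs"
      using Cons.prems(4,5) petal by fastforce+
    with True Cons show False
      by simp
  next
    case False
    then have "{a, Suc a} \<in> petal_edges (Suc off) (off + r)"
      using Cons.prems(6) by simp
    from petal[OF this] have a: "Suc off \<le> a" "Suc a \<le> off + r"
      using \<open>0 < a\<close> by auto
    then have "{0, a} \<in> petal_edges (Suc off) (off + r)"
      and "{0, Suc a} \<in> petal_edges (Suc off) (off + r)"
      using Cons.prems(4,5) tail by fastforce+
    then have "a = Suc off" "Suc a = off + r"
      using petal_spoke[of "Suc off" a "off + r"] petal_spoke[of "Suc off" "Suc a" "off + r"]
        a \<open>0 < a\<close>
      by auto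
    with Cons.prems(2) show False
      by simp
  qed
qed simp

lemma triangle_free_bouquet:
  assumes "0 \<notin> set rs" "2 \<notin> set rs"
  shows "triangle_free (bouquet_edges off rs)"
  unfolding triangle_free_def
proof (intro notI, elim exE conjE)
  let ?E = "bouquet_edges off rs"
  have ends: "x = 0 \<or> y = 0 \<or> y = Suc x \<or> x = Suc y" if "{x, y} \<in> ?E" for x y
    using bouquet_edge_shape[OF assms(1) that] by (auto simp: doubleton_eq_iff)
  have hub: False if "0 < x" "0 < y" "{0, x} \<in> ?E" "{0, y} \<in> ?E" "{x, y} \<in> ?E" for x y
  proof -
    have "y = Suc x \<or> x = Suc y"
      using ends[OF that(5)] that(1,2) by auto
    then show False
    proof
      assume "y = Suc x"
      then show False
        using bouquet_no_hub_triangle[OF assms, of x off] that by simp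
    next
      assume "x = Suc y"
      then show False
        using bouquet_no_hub_triangle[OF assms, of y off] that by (simp add: insert_commute)
    qed
  qed
  fix a b c
  assume ne: "a \<noteq> b" "b \<noteq> c" "a \<noteq> c" and edges: "{a, b} \<in> ?E" "{b, c} \<in> ?E" "{a, c} \<in> ?E"
  consider "a = 0" | "b = 0" | "c = 0" | "0 < a" "0 < b" "0 < c"
    by auto
  then show False
  proof cases
    case 1
    then show False using hub[of b c] ne edges by simp
  next
    case 2
    then show False using hub[of a c] ne edges by (simp add: insert_commute)
  next
    case 3
    then show False using hub[of a b] ne edges by (simp add: insert_commute)
  next
    case 4
    then show False using ends[OF edges(1)] ends[OF edges(2)] ends[OF edges(3)] ne by auto
  qed
qed

lemma degree_petal_eq_1_iff:
  assumes "0 < p" "x \<in> {p..q}"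
  shows "degree (petal_edges p q) x = 1 \<longleftrightarrow> p = q"
proof (cases "p = q")
  case True
  then have "{e \<in> petal_edges p q. x \<in> e} = {{0, p}}"
    using assms by (auto simp: petal_edges_def)
  then show ?thesis
    using True by (simp add: degree_def)
next
  case False
  have two: "2 \<le> degree (petal_edges p q) x"
    if "e1 \<in> petal_edges p q" "e2 \<in> petal_edges p q" "e1 \<noteq> e2" "x \<in> e1" "x \<in> e2" for e1 e2
    using two_le_degree[OF finite_petal_edges that] .
  consider "x = p" | "p < x" "x < q" | "x = q"
    using assms(2) False by force
  then have "2 \<le> degree (petal_edges p q) x"
  proof cases
    case 1
    then show ?thesis
      using two[OF spokes_in_petal_edges(1) rim_in_petal_edges[of p p q]] assms False
      by (auto simp: doubleton_eq_iff)
  next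
    case 2
    then show ?thesis
      using two[OF rim_in_petal_edges[of p "x - 1" q] rim_in_petal_edges[of p x q]]
      by (auto simp: doubleton_eq_iff)
  next
    case 3
    then show ?thesis
      using two[OF spokes_in_petal_edges(2) rim_in_petal_edges[of p "q - 1" q]] assms False
      by (auto simp: doubleton_eq_iff)
  qed
  then show ?thesis
    using False by simp
qed

lemma degree_bouquet_eq_1_iff:
  assumes "0 \<notin> set rs" "x \<in> {Suc off..off + sum_list rs}"
  shows "degree (bouquet_edges off rs) x = 1 \<longleftrightarrow> x \<in> bouquet_leaves off rs"
  using assms
proof (induction rs arbitrary: off)
  case (Cons r rs)
  have leaves_tail: "bouquet_leaves (off + r) rs \<subseteq> {Suc (off + r)..}"
    using bouquet_leaves_subset by force
  show ?case
  proof (cases "x \<le> off + r")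
    case True
    have "x \<notin> e" if "e \<in> bouquet_edges (off + r) rs" for e
      using bouquet_edge_subset[OF _ that] Cons.prems True
      unfolding bouquet_tail_vertices by auto
    then have "degree (bouquet_edges off (r # rs)) x = degree (petal_edges (Suc off) (off + r)) x"
      by (simp add: degree_Un_left)
    moreover have "x \<in> bouquet_leaves off (r # rs) \<longleftrightarrow> Suc off = off + r"
      using leaves_tail True Cons.prems(2) by auto
    ultimately show ?thesis
      using degree_petal_eq_1_iff[of "Suc off" x "off + r"] True Cons.prems(2) by simp
  next
    case False
    have "x \<notin> e" if "e \<in> petal_edges (Suc off) (off + r)" for e
      using petal_edge_subset[OF _ that] Cons.prems False by auto
    then have "degree (bouquet_edges off (r # rs)) x = degree (bouquet_edges (off + r) rs) x"
      using degree_Un_left[of "petal_edges (Suc off) (off + r)" x "bouquet_edges (off + r) rs"]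
      by (simp add: Un_commute)
    moreover have "x \<in> bouquet_leaves off (r # rs) \<longleftrightarrow> x \<in> bouquet_leaves (off + r) rs"
      using False by auto
    ultimately show ?thesis
      using Cons.IH[of "off + r"] Cons.prems False by simp
  qed
qed simp

lemma V1_bouquet:
  assumes "0 \<notin> set rs" "2 \<le> length rs"
  shows "V1 (bouquet_vertices 0 rs) (bouquet_edges 0 rs) = bouquet_leaves 0 rs"
proof -
  obtain r1 r2 rs' where rs: "rs = r1 # r2 # rs'"
    using assms(2) by (metis Suc_le_length_iff numeral_2_eq_2)
  have "{0, Suc 0} \<noteq> {0, Suc r1}"
    using assms(1) rs by (auto simp: doubleton_eq_iff)
  then have "2 \<le> degree (bouquet_edges 0 rs) 0"
    using rs spokes_in_petal_edges(1)[of "Suc 0" r1] spokes_in_petal_edges(1)[of "Suc r1" "r1 + r2"]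
    by (intro two_le_degree[OF finite_bouquet_edges]) auto
  moreover have "bouquet_leaves 0 rs \<subseteq> {Suc 0..sum_list rs}"
    using bouquet_leaves_subset[of 0 rs] by simp
  ultimately show ?thesis
    using degree_bouquet_eq_1_iff[OF assms(1), of _ 0]
    unfolding V1_def bouquet_vertices_def by auto
qed

lemma card_bouquet_leaves:
  "0 \<notin> set rs \<Longrightarrow> card (bouquet_leaves off rs) = length (filter (\<lambda>r. r = 1) rs)"
proof (induction rs arbitrary: off)
  case (Cons r rs)
  have "Suc off \<notin> bouquet_leaves (off + r) rs"
    using bouquet_leaves_subset[of "off + r" rs] Cons.prems by auto
  moreover have "finite (bouquet_leaves (off + r) rs)"
    using bouquet_leaves_subset finite_subset by blast
  ultimately show ?case
    using Cons by auto
qed simp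

lemma card_V1_bouquet:
  assumes "0 \<notin> set rs" "2 \<le> length rs"
  shows "card (V1 (bouquet_vertices 0 rs) (bouquet_edges 0 rs)) = length (filter (\<lambda>r. r = 1) rs)"
  using V1_bouquet[OF assms] card_bouquet_leaves[OF assms(1)] by simp

section \<open>The density \<open>\<rho>\<close> of a bouquet\<close>

text \<open>
  \<open>rho3_set\<close> with a prescribed set \<open>L\<close> of leaves in place of \<open>V1\<close>, so that it splits
  along petals.
\<close>

definition rho3_wrt :: "'a set set \<Rightarrow> 'a set \<Rightarrow> 'a set \<Rightarrow> int" where
  "rho3_wrt E L A = 6 * int (card {e \<in> E. e \<subseteq> A}) - 7 * int (card A) + 3 * int (card (A \<inter> L))"

lemma rho3_set_eq_rho3_wrt: "rho3_set V E A = rho3_wrt E (V1 V E) A"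
  by (simp add: rho3_set_def rho3_wrt_def induced_edges_def)

definition petal_rho :: "nat set \<Rightarrow> nat \<Rightarrow> nat \<Rightarrow> int" where
  "petal_rho A p q = 6 * int (card {e \<in> petal_edges p q. e \<subseteq> A}) - 7 * int (card (A \<inter> {p..q}))
     + (if p = q \<and> p \<in> A then 3 else 0)"

text \<open>\<open>6 (r + 1) - 7 r\<close> for a whole cycle, \<open>6 - 7 + 3\<close> for a pendant edge with its leaf.\<close>

definition petal_excess :: "nat \<Rightarrow> int" where
  "petal_excess r = (if r = 1 then 2 else 6 - int r)"

lemma int_length_filter: "int (length (filter P xs)) = (\<Sum>x\<leftarrow>xs. of_bool (P x))"
  by (induction xs) auto

lemma card_set_filter: "distinct xs \<Longrightarrow> card {x \<in> set xs. P x} = length (filter P xs)"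
  by (metis distinct_card distinct_filter set_filter)

lemma card_inter_interval: "card (A \<inter> {p..q}) = length (filter (\<lambda>x. x \<in> A) [p..<Suc q])"
proof -
  have "A \<inter> {p..q} = {x \<in> set [p..<Suc q]. x \<in> A}"
    by auto
  then show ?thesis
    using card_set_filter[OF distinct_upt[of p "Suc q"], of "\<lambda>x. x \<in> A"] by (simp only:)
qed

lemma petal_edges_cycle:
  assumes "0 < p" "0 < d"
  shows "petal_edges p (p + d) = set ([{0, p}, {0, p + d}] @ map (\<lambda>i. {i, Suc i}) [p..<p + d])"
    and "distinct ([{0, p}, {0, p + d}] @ map (\<lambda>i. {i, Suc i}) [p..<p + d])"
  using assms by (auto simp: petal_edges_def distinct_map inj_on_def doubleton_eq_iff)

lemma card_petal_edges_subset:
  assumes "0 < p" "0 < d"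
  shows "card {e \<in> petal_edges p (p + d). e \<subseteq> A} =
    length (filter (\<lambda>e. e \<subseteq> A) ([{0, p}, {0, p + d}] @ map (\<lambda>i. {i, Suc i}) [p..<p + d]))"
  unfolding petal_edges_cycle(1)[OF assms]
  using card_set_filter[OF petal_edges_cycle(2)[OF assms]] .

lemma petal_rho_cycle:
  assumes "0 < p" "0 < d"
  shows "petal_rho A p (p + d) =
    6 * (\<Sum>e\<leftarrow>[{0, p}, {0, p + d}] @ map (\<lambda>i. {i, Suc i}) [p..<p + d]. of_bool (e \<subseteq> A))
    - 7 * (\<Sum>x\<leftarrow>[p..<Suc (p + d)]. of_bool (x \<in> A))"
  using assms
  unfolding petal_rho_def card_petal_edges_subset[OF assms] card_inter_interval int_length_filter
  by simp

lemma petal_rho_pendant: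
  shows "petal_rho A p p \<le> (if 0 \<in> A then 2 else 0)"
    and "0 \<in> A \<Longrightarrow> p \<in> A \<Longrightarrow> petal_rho A p p = 2"
proof -
  have "{e \<in> petal_edges p p. e \<subseteq> A} = (if 0 \<in> A \<and> p \<in> A then {{0, p}} else {})"
    by (auto simp: petal_edges_def)
  then show "petal_rho A p p \<le> (if 0 \<in> A then 2 else 0)"
    and "0 \<in> A \<Longrightarrow> p \<in> A \<Longrightarrow> petal_rho A p p = 2"
    by (auto simp: petal_rho_def)
qed

lemma petal_rho_5_cycle:
  assumes "0 < p"
  shows "petal_rho A p (p + 3) \<le> (if 0 \<in> A then 2 else 0)"
    and "0 \<in> A \<Longrightarrow> {p..p + 3} \<subseteq> A \<Longrightarrow> petal_rho A p (p + 3) = 2"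
proof -
  show "petal_rho A p (p + 3) \<le> (if 0 \<in> A then 2 else 0)"
    using assms petal_rho_cycle[of p 3 A] by (simp add: numeral_eq_Suc upt_rec)
  assume "0 \<in> A" "{p..p + 3} \<subseteq> A"
  then have "p \<in> A" "p + 1 \<in> A" "p + 2 \<in> A" "p + 3 \<in> A"
    by auto
  with \<open>0 \<in> A\<close> show "petal_rho A p (p + 3) = 2"
    using assms petal_rho_cycle[of p 3 A] by (simp add: numeral_eq_Suc upt_rec)
qed

lemma petal_rho_7_cycle:
  assumes "0 < p"
  shows "petal_rho A p (p + 5) \<le> 0"
    and "0 \<in> A \<Longrightarrow> {p..p + 5} \<subseteq> A \<Longrightarrow> petal_rho A p (p + 5) = 0"
proof -
  show "petal_rho A p (p + 5) \<le> 0"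
    using assms petal_rho_cycle[of p 5 A] by (simp add: numeral_eq_Suc upt_rec)
  assume "0 \<in> A" "{p..p + 5} \<subseteq> A"
  then have "p \<in> A" "p + 1 \<in> A" "p + 2 \<in> A" "p + 3 \<in> A" "p + 4 \<in> A" "p + 5 \<in> A"
    by auto
  with \<open>0 \<in> A\<close> show "petal_rho A p (p + 5) = 0"
    using assms petal_rho_cycle[of p 5 A] by (simp add: numeral_eq_Suc upt_rec)
qed

lemma petal_rho_le:
  assumes "r \<in> {1, 4, 6}"
  shows "petal_rho A (Suc off) (off + r) \<le> (if 0 \<in> A then petal_excess r else 0)"
proof -
  consider "r = 1" | "r = 4" "off + r = Suc off + 3" | "r = 6" "off + r = Suc off + 5"
    using assms by auto
  then show ?thesis
  proof cases
    case 1
    then show ?thesis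
      using petal_rho_pendant(1)[of A "Suc off"] by (simp add: petal_excess_def split: if_split_asm)
  next
    case 2
    have "petal_rho A (Suc off) (off + r) \<le> (if 0 \<in> A then 2 else 0)"
      unfolding 2(2) by (rule petal_rho_5_cycle(1)) simp
    with 2(1) show ?thesis
      by (simp add: petal_excess_def split: if_split_asm)
  next
    case 3
    have "petal_rho A (Suc off) (off + r) \<le> 0"
      unfolding 3(2) by (rule petal_rho_7_cycle(1)) simp
    with 3(1) show ?thesis
      by (simp add: petal_excess_def)
  qed
qed

lemma petal_rho_whole:
  assumes "r \<in> {1, 4, 6}" "0 \<in> A" "{Suc off..off + r} \<subseteq> A"
  shows "petal_rho A (Suc off) (off + r) = petal_excess r"
proof -
  consider "r = 1" | "r = 4" "off + r = Suc off + 3" | "r = 6" "off + r = Suc off + 5"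
    using assms by auto
  then show ?thesis
  proof cases
    case 1
    then show ?thesis
      using petal_rho_pendant(2)[of A "Suc off"] assms(2,3) by (simp add: petal_excess_def)
  next
    case 2
    have "petal_rho A (Suc off) (off + r) = 2"
      unfolding 2(2) by (rule petal_rho_5_cycle(2)) (use assms(2,3) 2(2) in auto)
    with 2(1) show ?thesis
      by (simp add: petal_excess_def)
  next
    case 3
    have "petal_rho A (Suc off) (off + r) = 0"
      unfolding 3(2) by (rule petal_rho_7_cycle(2)) (use assms(2,3) 3(2) in auto)
    with 3(1) show ?thesis
      by (simp add: petal_excess_def)
  qed
qed

lemma petal_edges_Int_bouquet_edges:
  assumes "0 \<notin> set (r # rs)"
  shows "petal_edges (Suc off) (off + r) \<inter> bouquet_edges (off + r) rs = {}"
proof (rule ccontr)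
  assume "\<not> ?thesis"
  then obtain e where e: "e \<in> petal_edges (Suc off) (off + r)" "e \<in> bouquet_edges (off + r) rs"
    by blast
  have "e \<subseteq> insert 0 {Suc off..off + r}" "e \<subseteq> insert 0 {Suc (off + r)..}"
    using petal_edge_subset[OF _ e(1)] bouquet_edge_subset[OF _ e(2)] assms
    unfolding bouquet_tail_vertices by auto
  moreover have "insert 0 {Suc off..off + r} \<inter> insert 0 {Suc (off + r)..} = {0}"
    by auto
  ultimately have "e \<subseteq> {0}"
    by blast
  moreover have "card e = 2"
    using card_spoke_or_rim[OF bouquet_edge_shape[OF _ e(2)]] assms by simp
  ultimately show False
    using card_mono[of "{0}" e] by simp
qed

lemma rho3_wrt_bouquet_Cons:
  assumes "0 \<notin> set (r # rs)" "A \<subseteq> bouquet_vertices off (r # rs)"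
  shows "rho3_wrt (bouquet_edges off (r # rs)) (bouquet_leaves off (r # rs)) A =
    petal_rho A (Suc off) (off + r)
    + rho3_wrt (bouquet_edges (off + r) rs) (bouquet_leaves (off + r) rs) (A - {Suc off..off + r})"
proof -
  define B where "B = {Suc off..off + r}"
  have "finite A"
    using assms(2) finite_subset by (auto simp: bouquet_vertices_def)
  have tail: "e \<subseteq> insert 0 {Suc (off + r)..}" if "e \<in> bouquet_edges (off + r) rs" for e
    using bouquet_edge_subset[OF _ that] assms(1) unfolding bouquet_tail_vertices by auto
  have "{e \<in> bouquet_edges off (r # rs). e \<subseteq> A} =
      {e \<in> petal_edges (Suc off) (off + r). e \<subseteq> A} \<union> {e \<in> bouquet_edges (off + r) rs. e \<subseteq> A - B}"
    using tail unfolding B_def by fastforce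
  moreover have "{e \<in> petal_edges (Suc off) (off + r). e \<subseteq> A}
      \<inter> {e \<in> bouquet_edges (off + r) rs. e \<subseteq> A - B} = {}"
    using petal_edges_Int_bouquet_edges[OF assms(1)] by blast
  ultimately have edges: "card {e \<in> bouquet_edges off (r # rs). e \<subseteq> A} =
      card {e \<in> petal_edges (Suc off) (off + r). e \<subseteq> A}
      + card {e \<in> bouquet_edges (off + r) rs. e \<subseteq> A - B}"
    by (simp add: card_Un_disjoint finite_petal_edges finite_bouquet_edges)
  have "bouquet_leaves (off + r) rs \<inter> B = {}"
    using bouquet_leaves_subset[of "off + r" rs] unfolding B_def by auto
  then have "A \<inter> bouquet_leaves off (r # rs) =
      (if r = 1 \<and> Suc off \<in> A then {Suc off} else {}) \<union> (A - B) \<inter> bouquet_leaves (off + r) rs"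
    and "(if r = 1 \<and> Suc off \<in> A then {Suc off} else {})
      \<inter> (A - B) \<inter> bouquet_leaves (off + r) rs = {}"
    unfolding B_def by auto
  then have leaves: "card (A \<inter> bouquet_leaves off (r # rs)) =
      (if r = 1 \<and> Suc off \<in> A then 1 else 0) + card ((A - B) \<inter> bouquet_leaves (off + r) rs)"
    using \<open>finite A\<close> by (simp add: card_Un_disjoint Int_assoc)
  show ?thesis
    unfolding rho3_wrt_def petal_rho_def edges leaves card_Int_Diff[OF \<open>finite A\<close>, of B]
    unfolding B_def by simp
qed

lemma rho3_wrt_bouquet_le:
  assumes "set rs \<subseteq> {1, 4, 6}" "A \<subseteq> bouquet_vertices off rs"
  shows "rho3_wrt (bouquet_edges off rs) (bouquet_leaves off rs) A
    \<le> (if 0 \<in> A then (\<Sum>r\<leftarrow>rs. petal_excess r) - 7 else 0)"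
  using assms
proof (induction rs arbitrary: off A)
  case Nil
  then have "A = {} \<or> A = {0}"
    by (auto simp: bouquet_vertices_def)
  then show ?case
    by (auto simp: rho3_wrt_def)
next
  case (Cons r rs)
  define B where "B = {Suc off..off + r}"
  have "0 \<notin> set (r # rs)"
    using Cons.prems(1) by auto
  then have split: "rho3_wrt (bouquet_edges off (r # rs)) (bouquet_leaves off (r # rs)) A =
      petal_rho A (Suc off) (off + r)
      + rho3_wrt (bouquet_edges (off + r) rs) (bouquet_leaves (off + r) rs) (A - B)"
    unfolding B_def using Cons.prems(2) by (rule rho3_wrt_bouquet_Cons)
  have "A - B \<subseteq> bouquet_vertices (off + r) rs"
    using Cons.prems(2) unfolding B_def bouquet_vertices_def by auto
  moreover have "0 \<in> A - B \<longleftrightarrow> 0 \<in> A"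
    unfolding B_def by auto
  ultimately have "rho3_wrt (bouquet_edges (off + r) rs) (bouquet_leaves (off + r) rs) (A - B)
      \<le> (if 0 \<in> A then (\<Sum>r\<leftarrow>rs. petal_excess r) - 7 else 0)"
    using Cons.IH[of "A - B" "off + r"] Cons.prems(1) by simp
  moreover have "petal_rho A (Suc off) (off + r) \<le> (if 0 \<in> A then petal_excess r else 0)"
    using Cons.prems(1) by (intro petal_rho_le) simp
  ultimately show ?case
    unfolding split by (cases "0 \<in> A") simp_all
qed

lemma rho3_wrt_bouquet_whole:
  assumes "set rs \<subseteq> {1, 4, 6}"
  shows "rho3_wrt (bouquet_edges off rs) (bouquet_leaves off rs) (bouquet_vertices off rs)
    = (\<Sum>r\<leftarrow>rs. petal_excess r) - 7"
  using assms
proof (induction rs arbitrary: off)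
  case Nil
  then show ?case
    by (simp add: rho3_wrt_def bouquet_vertices_def)
next
  case (Cons r rs)
  have "bouquet_vertices off (r # rs) - {Suc off..off + r} = bouquet_vertices (off + r) rs"
    using Cons.prems unfolding bouquet_vertices_def by auto
  moreover have "petal_rho (bouquet_vertices off (r # rs)) (Suc off) (off + r) = petal_excess r"
    using Cons.prems by (intro petal_rho_whole) (auto simp: bouquet_vertices_def)
  moreover have "rho3_wrt (bouquet_edges (off + r) rs) (bouquet_leaves (off + r) rs)
      (bouquet_vertices (off + r) rs)
      = (\<Sum>r\<leftarrow>rs. petal_excess r) - 7"
    using Cons by simp
  moreover have "0 \<notin> set (r # rs)"
    using Cons.prems by auto
  ultimately show ?case
    using rho3_wrt_bouquet_Cons[of r rs "bouquet_vertices off (r # rs)" off] by simp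
qed

lemma rho3_bouquet:
  assumes "set rs \<subseteq> {1, 4, 6}" "2 \<le> length rs" "7 \<le> (\<Sum>r\<leftarrow>rs. petal_excess r)"
  shows "rho3 (bouquet_vertices 0 rs) (bouquet_edges 0 rs) = (\<Sum>r\<leftarrow>rs. petal_excess r) - 7"
proof -
  let ?V = "bouquet_vertices 0 rs" and ?E = "bouquet_edges 0 rs"
  have "0 \<notin> set rs"
    using assms(1) by auto
  then have rho: "rho3_set ?V ?E A = rho3_wrt ?E (bouquet_leaves 0 rs) A" for A
    by (simp add: rho3_set_eq_rho3_wrt V1_bouquet assms(2))
  show ?thesis
    unfolding rho3_def
  proof (rule Max_eqI)
    show "finite (rho3_set ?V ?E ` Pow ?V)"
      by (simp add: bouquet_vertices_def)
  next
    fix y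
    assume "y \<in> rho3_set ?V ?E ` Pow ?V"
    then obtain A where A: "A \<subseteq> ?V" "y = rho3_set ?V ?E A"
      by blast
    then show "y \<le> (\<Sum>r\<leftarrow>rs. petal_excess r) - 7"
      using rho3_wrt_bouquet_le[OF assms(1) A(1)] assms(3) by (simp add: rho split: if_split_asm)
  next
    have "rho3_set ?V ?E ?V = (\<Sum>r\<leftarrow>rs. petal_excess r) - 7"
      by (simp add: rho rho3_wrt_bouquet_whole[OF assms(1)])
    then show "(\<Sum>r\<leftarrow>rs. petal_excess r) - 7 \<in> rho3_set ?V ?E ` Pow ?V"
      by (metis Pow_top imageI)
  qed
qed

section \<open>Equitable colourings of bouquets\<close>

lemma card_independent_petal:
  assumes "r \<in> {1, 4, 6}" "0 \<in> C" "\<forall>e \<in> petal_edges (Suc off) (off + r). \<not> e \<subseteq> C"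
  shows "card (C \<inter> {Suc off..off + r}) \<le> (r - 1) div 2"
proof -
  define p where "p = Suc off"
  consider "r = 1" | "r = 4" "off + r = p + 3" | "r = 6" "off + r = p + 5"
    using assms(1) unfolding p_def by auto
  then show ?thesis
  proof cases
    case 1
    then have "p \<notin> C"
      using assms(2,3) spokes_in_petal_edges(1)[of p p] unfolding p_def by auto
    with 1 show ?thesis
      unfolding p_def by simp
  next
    case 2
    have "\<forall>e \<in> petal_edges p (p + 3). \<not> e \<subseteq> C"
      using assms(3) unfolding 2(2) p_def .
    then have "\<not> {0, p} \<subseteq> C" "\<not> {0, p + 3} \<subseteq> C" "\<not> {p + 1, Suc (p + 1)} \<subseteq> C"
      using spokes_in_petal_edges[where p = p and q = "p + 3"] rim_in_petal_edges[of p "p + 1" "p + 3"]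
      by auto
    then have "int (card (C \<inter> {p..p + 3})) \<le> 1"
      using assms(2) unfolding card_inter_interval int_length_filter
      by (simp add: numeral_eq_Suc upt_rec)
    with 2(1) show ?thesis
      unfolding 2(2) p_def[symmetric] by simp
  next
    case 3
    have "\<forall>e \<in> petal_edges p (p + 5). \<not> e \<subseteq> C"
      using assms(3) unfolding 3(2) p_def .
    then have "\<not> {0, p} \<subseteq> C" "\<not> {0, p + 5} \<subseteq> C"
      "\<not> {p + 1, Suc (p + 1)} \<subseteq> C" "\<not> {p + 3, Suc (p + 3)} \<subseteq> C"
      using spokes_in_petal_edges[where p = p and q = "p + 5"]
        rim_in_petal_edges[of p "p + 1" "p + 5"] rim_in_petal_edges[of p "p + 3" "p + 5"] by auto
    then have "int (card (C \<inter> {p..p + 5})) \<le> 2"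
      using assms(2) unfolding card_inter_interval int_length_filter
      by (simp add: numeral_eq_Suc upt_rec)
    with 3(1) show ?thesis
      unfolding 3(2) p_def[symmetric] by simp
  qed
qed

lemma card_independent_bouquet:
  assumes "set rs \<subseteq> {1, 4, 6}" "C \<subseteq> bouquet_vertices off rs" "0 \<in> C"
    and "\<forall>e \<in> bouquet_edges off rs. \<not> e \<subseteq> C"
  shows "card C \<le> 1 + (\<Sum>r\<leftarrow>rs. (r - 1) div 2)"
  using assms
proof (induction rs arbitrary: off C)
  case Nil
  then have "C = {0}"
    by (auto simp: bouquet_vertices_def)
  then show ?case
    by simp
next
  case (Cons r rs)
  define B where "B = {Suc off..off + r}"
  have "finite C"
    using Cons.prems(2) finite_subset by (auto simp: bouquet_vertices_def)
  have "C - B \<subseteq> bouquet_vertices (off + r) rs"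
    using Cons.prems(2) unfolding B_def bouquet_vertices_def by auto
  moreover have "0 \<in> C - B"
    using Cons.prems(3) unfolding B_def by simp
  moreover have "\<forall>e \<in> bouquet_edges (off + r) rs. \<not> e \<subseteq> C - B"
    using Cons.prems(4) by auto
  ultimately have "card (C - B) \<le> 1 + (\<Sum>r\<leftarrow>rs. (r - 1) div 2)"
    using Cons.IH[of "C - B" "off + r"] Cons.prems(1) by simp
  moreover have "card (C \<inter> B) \<le> (r - 1) div 2"
    unfolding B_def using Cons.prems(1,3,4) by (intro card_independent_petal) simp_all
  ultimately show ?case
    using card_Int_Diff[OF \<open>finite C\<close>, of B] by simp
qed

lemma no_equitable_3_coloring_bouquet:
  assumes "set rs \<subseteq> {1, 4, 6}" "Suc (sum_list rs) = 3 * t" "1 + (\<Sum>r\<leftarrow>rs. (r - 1) div 2) < t"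
  shows "\<not> (\<exists>f. equitable_3_coloring (bouquet_vertices 0 rs) (bouquet_edges 0 rs) f)"
proof (rule no_equitable_3_coloring)
  show "simple_graph (bouquet_vertices 0 rs) (bouquet_edges 0 rs)"
    using assms(1) by (intro simple_graph_bouquet) auto
  show "card (bouquet_vertices 0 rs) = 3 * t"
    using assms(2) by (simp add: card_bouquet_vertices)
  show "0 \<in> bouquet_vertices 0 rs"
    by (simp add: bouquet_vertices_def)
  show "card C < t"
    if "C \<subseteq> bouquet_vertices 0 rs" "0 \<in> C" "\<forall>e \<in> bouquet_edges 0 rs. \<not> e \<subseteq> C" for C
    using card_independent_bouquet[OF assms(1) that] assms(3) by simp
qed

theorem mainTheorem3:
  fixes n l :: nat
  assumes "l \<le> 5"
  shows "\<exists>(V :: nat set) (E :: nat set set).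
           simple_graph V E \<and> triangle_free E \<and> outerplanar V E \<and>
           card V > n \<and> card (V1 V E) = l \<and> rho3 V E = 3 \<and>
           \<not> (\<exists>f. equitable_3_coloring V E f)"
proof -
  define rs where "rs = replicate l 1 @ replicate (5 - l) 4 @ replicate n (6 :: nat)"
  let ?V = "bouquet_vertices 0 rs" and ?E = "bouquet_edges 0 rs"
  have petals: "set rs \<subseteq> {1, 4, 6}" and "0 \<notin> set rs" "2 \<notin> set rs" "2 \<le> length rs"
    using assms by (auto simp: rs_def)
  have size: "Suc (sum_list rs) = 3 * (7 - l + 2 * n)" "n < card ?V"
    using assms by (simp_all add: card_bouquet_vertices rs_def sum_list_replicate)
  have "1 + (\<Sum>r\<leftarrow>rs. (r - 1) div 2) < 7 - l + 2 * n"
    using assms by (simp add: rs_def sum_list_replicate)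
  with petals size(1) have "\<not> (\<exists>f. equitable_3_coloring ?V ?E f)"
    by (rule no_equitable_3_coloring_bouquet)
  moreover have "card (V1 ?V ?E) = l"
    using card_V1_bouquet[OF \<open>0 \<notin> set rs\<close> \<open>2 \<le> length rs\<close>] by (simp add: rs_def filter_replicate)
  moreover have "rho3 ?V ?E = 3"
    using rho3_bouquet[OF petals \<open>2 \<le> length rs\<close>] assms
    by (simp add: rs_def sum_list_replicate petal_excess_def)
  ultimately show ?thesis
    using size(2) simple_graph_bouquet[OF \<open>0 \<notin> set rs\<close>] outerplanar_bouquet[OF \<open>0 \<notin> set rs\<close>]
      triangle_free_bouquet[OF \<open>0 \<notin> set rs\<close> \<open>2 \<notin> set rs\<close>]
    by blast
qed

end
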